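(* Let $(X,\mathcal{B},\mu)$ be a measure space, $\varphi:X\to X$ a measurable map, $I$ a countable set and $\{B_i\}_{i\in I}$ a family of measurable sets of positive measure. Then the following are equivalent: (i) there exists $A\subseteq\mathbb{N}$ with $\overline{\mathrm{dens}}(A)=1$ such that $\lim_{n\in A}\mu(\varphi^{-n}(B_i))=0$ for all $i\in I$; (ii) there exists an increasing sequence $(M_j)$ in $\mathbb{N}$ such that for every $k\in\mathbb{N}$ and $i\in I$ there is $n_{k,i}\in\mathbb{N}$ with \[\operatorname{card}\{1\le n\le M_j:\ \mu(\varphi^{-n}(B_i))<k^{-1}\}\ge M_j(1-k^{-1})\quad\text{for all } j\ge n_{k,i}.\]
   Context: For $A\subseteq\mathbb{N}$, $\overline{\mathrm{dens}}(A)=\limsup_{N\to\infty}\frac{\operatorname{card}(A\cap[1,N])}{N}$. The notation $\lim_{n\in A}a_n=0$ means $a_n\to0$ as $n\to\infty$ with $n\in A$. *)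

theory Defs
  imports "HOL-Analysis.Analysis" "HOL-Library.Liminf_Limsup"
begin

definition upper_dens :: "nat set \<Rightarrow> ereal" where
  "upper_dens A = limsup (\<lambda>N. ereal (real (card (A \<inter> {1..N})) / real N))"

end

theory Submission
  imports Defs
begin

(* Both conditions concern only the numbers a_i(n) = \<mu>(\<phi>^-n (B_i)). With dens_ratio A N = card (A \<inter> [1,N]) / N, condition (ii) says that
   every sublevel set {n. a_i(n) < \<epsilon>} has density ratio tending to 1 along (M_j), and (i) says
   that a set A of upper density 1 lies, up to finitely many elements, in every sublevel set.
   For (i) \<Longrightarrow> (ii) take M_j along which the density ratio of A tends to 1.
   For (ii) \<Longrightarrow> (i), finite intersections of sublevel sets still have density ratio tending to 1
   along (M_j); enumerating the countably many sets {n. a_i(n) < 1/(k+1)} thus yields a decreasing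
   sequence T_k of sets of upper density 1. Choosing q_k increasing with T_k nearly full at q_k,
   the diagonal set A = {n. \<forall>k. q_k < n \<longrightarrow> n \<in> T_k} contains T_k \<inter> [1,q_k] because the T_k
   decrease, so A has upper density 1 while A - T_k is finite for every k. *)

definition dens_ratio :: "nat set \<Rightarrow> nat \<Rightarrow> real" where
  "dens_ratio A N = real (card (A \<inter> {1..N})) / real N"

lemma upper_dens_eq_limsup_dens_ratio: "upper_dens A = limsup (\<lambda>N. ereal (dens_ratio A N))"
  by (simp add: upper_dens_def dens_ratio_def)

lemma card_Int_atLeastAtMost_le: "card (A \<inter> {1..N}) \<le> N"
  using card_mono[of "{1..N}" "A \<inter> {1..N}"] by auto

lemma dens_ratio_le_1: "dens_ratio A N \<le> 1"
  using card_Int_atLeastAtMost_le[of A N] by (cases "N = 0") (simp_all add: dens_ratio_def)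

lemma dens_ratio_mono: "A \<inter> {1..N} \<subseteq> B \<Longrightarrow> dens_ratio A N \<le> dens_ratio B N"
  unfolding dens_ratio_def by (intro divide_right_mono of_nat_mono card_mono) auto

lemma dens_ratio_UNIV: "0 < N \<Longrightarrow> dens_ratio UNIV N = 1"
  by (simp add: dens_ratio_def)

lemma dens_ratio_ge_iff: "0 < N \<Longrightarrow> c \<le> dens_ratio A N \<longleftrightarrow> real N * c \<le> real (card (A \<inter> {1..N}))"
  by (simp add: dens_ratio_def pos_le_divide_eq mult.commute)

lemma dens_ratio_le_add:
  assumes "card ((A - B) \<inter> {1..N}) \<le> m"
  shows "dens_ratio A N \<le> dens_ratio B N + real m / real N"
proof -
  have "card (A \<inter> {1..N}) \<le> card (B \<inter> {1..N} \<union> (A - B) \<inter> {1..N})"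
    by (intro card_mono) auto
  also have "\<dots> \<le> card (B \<inter> {1..N}) + m"
    using card_Un_le assms by (meson add_left_mono order_trans)
  finally show ?thesis
    unfolding dens_ratio_def add_divide_distrib[symmetric] by (intro divide_right_mono) auto
qed

lemma dens_ratio_Int_ge: "dens_ratio A N + dens_ratio B N - 1 \<le> dens_ratio (A \<inter> B) N"
proof (cases "N = 0")
  case False
  have "card (A \<inter> {1..N}) + card (B \<inter> {1..N}) = card (A \<inter> {1..N} \<union> B \<inter> {1..N}) + card (A \<inter> B \<inter> {1..N})"
    using card_Un_Int[of "A \<inter> {1..N}" "B \<inter> {1..N}"] by (simp add: Int_ac)
  moreover have "card (A \<inter> {1..N} \<union> B \<inter> {1..N}) \<le> N"
    using card_Int_atLeastAtMost_le[of "A \<union> B" N] by (simp add: Int_Un_distrib2)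
  ultimately have "real (card (A \<inter> {1..N})) + real (card (B \<inter> {1..N})) - real N \<le> real (card (A \<inter> B \<inter> {1..N}))"
    by linarith
  then have "(real (card (A \<inter> {1..N})) + real (card (B \<inter> {1..N})) - real N) / real N
      \<le> dens_ratio (A \<inter> B) N"
    unfolding dens_ratio_def by (rule divide_right_mono) simp
  with False show ?thesis
    by (simp add: dens_ratio_def add_divide_distrib diff_divide_distrib)
qed (simp add: dens_ratio_def)

lemma tendsto_dens_ratio_1_Int:
  assumes "((\<lambda>x. dens_ratio A (f x)) \<longlongrightarrow> 1) F" "((\<lambda>x. dens_ratio B (f x)) \<longlongrightarrow> 1) F"
  shows "((\<lambda>x. dens_ratio (A \<inter> B) (f x)) \<longlongrightarrow> 1) F"
proof (rule tendsto_sandwich[where h = "\<lambda>_. 1"])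
  show "((\<lambda>x. dens_ratio A (f x) + dens_ratio B (f x) - 1) \<longlongrightarrow> 1) F"
    using tendsto_diff[OF tendsto_add[OF assms] tendsto_const, of 1] by simp
qed (simp_all add: dens_ratio_Int_ge dens_ratio_le_1)

lemma tendsto_dens_ratio_1_INT:
  assumes "finite X" "filterlim f at_top F" "\<And>x. x \<in> X \<Longrightarrow> ((\<lambda>y. dens_ratio (S x) (f y)) \<longlongrightarrow> 1) F"
  shows "((\<lambda>y. dens_ratio (\<Inter>x\<in>X. S x) (f y)) \<longlongrightarrow> 1) F"
  using assms(1,3)
proof (induction X rule: finite_induct)
  case empty
  have "eventually (\<lambda>y. f y \<ge> 1) F"
    using assms(2) by (simp add: filterlim_at_top)
  then have "eventually (\<lambda>y. dens_ratio UNIV (f y) = 1) F"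
    by eventually_elim (simp add: dens_ratio_UNIV)
  then show ?case
    by (simp add: tendsto_eventually)
next
  case (insert x X)
  then show ?case
    by (simp add: tendsto_dens_ratio_1_Int)
qed

lemma tendsto_dens_ratio_1_almost_subset:
  assumes "filterlim f at_top F" "((\<lambda>y. dens_ratio A (f y)) \<longlongrightarrow> 1) F" "finite (A - B)"
  shows "((\<lambda>y. dens_ratio B (f y)) \<longlongrightarrow> 1) F"
proof (rule tendsto_sandwich[where h = "\<lambda>_. 1"])
  define c where "c = card (A - B)"
  have "card ((A - B) \<inter> {1..N}) \<le> c" for N
    unfolding c_def using assms(3) by (intro card_mono) auto
  then show "eventually (\<lambda>y. dens_ratio A (f y) - real c / real (f y) \<le> dens_ratio B (f y)) F"
    using dens_ratio_le_add by (simp add: algebra_simps)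
  have "filterlim (\<lambda>y. real (f y)) at_infinity F"
    using filterlim_compose[OF filterlim_real_sequentially assms(1)] by (rule filterlim_at_top_imp_at_infinity)
  then show "((\<lambda>y. dens_ratio A (f y) - real c / real (f y)) \<longlongrightarrow> 1) F"
    using tendsto_diff[OF assms(2) tendsto_divide_0[OF tendsto_const]] by simp
qed (simp_all add: dens_ratio_le_1)

lemma upper_dens_le_1: "upper_dens A \<le> 1"
  unfolding upper_dens_eq_limsup_dens_ratio
  by (rule Limsup_bounded, rule always_eventually) (simp add: dens_ratio_le_1)

lemma upper_dens_eq_1_iff:
  "upper_dens A = 1 \<longleftrightarrow> (\<exists>Ns. strict_mono Ns \<and> (\<lambda>j. dens_ratio A (Ns j)) \<longlonglongrightarrow> 1)"
proof
  assume "upper_dens A = 1"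
  then obtain Ns where "strict_mono Ns" "((\<lambda>N. ereal (dens_ratio A N)) \<circ> Ns) \<longlonglongrightarrow> ereal 1"
    using limsup_subseq_lim[of "\<lambda>N. ereal (dens_ratio A N)"]
    by (auto simp: upper_dens_eq_limsup_dens_ratio one_ereal_def)
  then show "\<exists>Ns. strict_mono Ns \<and> (\<lambda>j. dens_ratio A (Ns j)) \<longlonglongrightarrow> 1"
    by (auto simp: o_def lim_ereal)
next
  assume "\<exists>Ns. strict_mono Ns \<and> (\<lambda>j. dens_ratio A (Ns j)) \<longlonglongrightarrow> 1"
  then obtain Ns where Ns: "strict_mono Ns" "(\<lambda>j. ereal (dens_ratio A (Ns j))) \<longlonglongrightarrow> ereal 1"
    by (auto simp: lim_ereal)
  have "ereal 1 = limsup ((\<lambda>N. ereal (dens_ratio A N)) \<circ> Ns)"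
    using lim_imp_Limsup[OF trivial_limit_sequentially Ns(2)] by (simp add: o_def)
  also have "\<dots> \<le> upper_dens A"
    unfolding upper_dens_eq_limsup_dens_ratio using Ns(1) by (rule limsup_subseq_mono)
  finally show "upper_dens A = 1"
    using upper_dens_le_1[of A] by (simp add: one_ereal_def)
qed

lemma upper_dens_1_large_dens_ratio:
  assumes "upper_dens A = 1" "c < 1"
  shows "\<exists>N\<ge>m. c < dens_ratio A N"
proof -
  obtain Ns where Ns: "strict_mono Ns" "(\<lambda>j. dens_ratio A (Ns j)) \<longlonglongrightarrow> 1"
    using assms(1) upper_dens_eq_1_iff by blast
  have "eventually (\<lambda>j. m \<le> Ns j \<and> c < dens_ratio A (Ns j)) sequentially"
    using filterlim_subseq[OF Ns(1)] order_tendsto_iff[THEN iffD1, OF Ns(2)] assms(2)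
    by (auto simp: filterlim_at_top intro: eventually_conj)
  then show ?thesis
    using eventually_happens'[OF trivial_limit_sequentially] by blast
qed

lemma upper_dens_1_diagonal:
  assumes "decseq T" "\<And>k. upper_dens (T k) = 1"
  shows "\<exists>A. upper_dens A = 1 \<and> (\<forall>k. finite (A - T k))"
proof -
  have "\<forall>k m. \<exists>N\<ge>m. 1 - inverse (real (Suc k)) < dens_ratio (T k) N"
    using upper_dens_1_large_dens_ratio[OF assms(2)] by simp
  then obtain g where g: "\<And>k m. m \<le> g k m" "\<And>k m. 1 - inverse (real (Suc k)) < dens_ratio (T k) (g k m)"
    by metis
  define q where "q = rec_nat (g 0 0) (\<lambda>k qk. g (Suc k) (Suc qk))"
  have "q k < q (Suc k)" for k
    using g(1)[of "Suc (q k)" "Suc k"] by (simp add: q_def)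
  then have "strict_mono q"
    by (rule strict_monoI_Suc)
  have "q k = g k (case k of 0 \<Rightarrow> 0 | Suc j \<Rightarrow> Suc (q j))" for k
    by (cases k) (simp_all add: q_def)
  then have q_dens: "1 - inverse (real (Suc k)) < dens_ratio (T k) (q k)" for k
    using g(2) by metis
  define A where "A = {n. \<forall>k. q k < n \<longrightarrow> n \<in> T k}"
  have "finite (A - T k)" for k
    by (rule finite_subset[of _ "{..q k}"]) (auto simp: A_def not_less)
  moreover have "(\<lambda>k. dens_ratio A (q k)) \<longlonglongrightarrow> 1"
  proof (rule tendsto_sandwich[where f = "\<lambda>k. 1 - inverse (real (Suc k))" and h = "\<lambda>_. 1"])
    have "T k \<inter> {1..q k} \<subseteq> A" for k
    proof (clarsimp simp: A_def)
      fix n m assume n: "n \<in> T k" "n \<le> q k" and "q m < n"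
      then have "m \<le> k"
        using \<open>strict_mono q\<close> by (metis le_less_trans less_le_not_le nle_le strict_mono_less_eq)
      then show "n \<in> T m"
        using n decseqD[OF assms(1)] by blast
    qed
    then have "dens_ratio (T k) (q k) \<le> dens_ratio A (q k)" for k
      by (rule dens_ratio_mono)
    then have "1 - inverse (real (Suc k)) \<le> dens_ratio A (q k)" for k
      using q_dens[of k] by (meson less_imp_le order_trans)
    then show "eventually (\<lambda>k. 1 - inverse (real (Suc k)) \<le> dens_ratio A (q k)) sequentially"
      by simp
    show "(\<lambda>k. 1 - inverse (real (Suc k))) \<longlonglongrightarrow> 1"
      using tendsto_diff[OF tendsto_const LIMSEQ_inverse_real_of_nat, of 1] by simp
  qed (simp_all add: dens_ratio_le_1)
  ultimately show ?thesis
    using \<open>strict_mono q\<close> upper_dens_eq_1_iff by blast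
qed

lemma upper_dens_1_almost_subset_countable:
  assumes "countable X" "strict_mono Ns"
    and "\<And>x. x \<in> X \<Longrightarrow> (\<lambda>j. dens_ratio (S x) (Ns j)) \<longlonglongrightarrow> 1"
  shows "\<exists>A. upper_dens A = 1 \<and> (\<forall>x\<in>X. finite (A - S x))"
proof -
  define F where "F k = {x \<in> X. to_nat_on X x < k}" for k
  define T where "T k = (\<Inter>x\<in>F k. S x)" for k
  have "decseq T"
    unfolding decseq_def T_def F_def by auto
  moreover have "upper_dens (T k) = 1" for k
  proof -
    have "F k \<subseteq> from_nat_into X ` {..<k}"
      using from_nat_into_to_nat_on[OF assms(1)] by (force simp: F_def)
    then have "finite (F k)"
      by (rule finite_subset) simp
    then have "(\<lambda>j. dens_ratio (T k) (Ns j)) \<longlonglongrightarrow> 1"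
      unfolding T_def using filterlim_subseq[OF assms(2)] assms(3)
      by (rule tendsto_dens_ratio_1_INT) (simp add: F_def)
    then show ?thesis
      using assms(2) upper_dens_eq_1_iff by blast
  qed
  ultimately obtain A where A: "upper_dens A = 1" "\<And>k. finite (A - T k)"
    using upper_dens_1_diagonal by blast
  have "finite (A - S x)" if "x \<in> X" for x
  proof -
    have "T (Suc (to_nat_on X x)) \<subseteq> S x"
      using that by (auto simp: T_def F_def)
    then show ?thesis
      using A(2) by (meson Diff_mono finite_subset order_refl)
  qed
  with A(1) show ?thesis
    by blast
qed

lemma tendsto_0_inf_principal_iff_finite_sublevel:
  fixes a :: "nat \<Rightarrow> ennreal"
  shows "(a \<longlongrightarrow> 0) (inf sequentially (principal A)) \<longleftrightarrow> (\<forall>\<epsilon>>0. finite (A - {n. a n < \<epsilon>}))"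
  unfolding order_tendsto_iff eventually_inf_principal cofinite_eq_sequentially[symmetric] eventually_cofinite
  by (simp add: set_diff_eq)

lemma ex_upper_dens_1_finite_sublevel_iff:
  fixes a :: "'i \<Rightarrow> nat \<Rightarrow> ennreal"
  assumes "countable I"
  shows "(\<exists>A. upper_dens A = 1 \<and> (\<forall>i\<in>I. \<forall>\<epsilon>>0. finite (A - {n. a i n < \<epsilon>}))) \<longleftrightarrow>
    (\<exists>Ns. strict_mono Ns \<and> (\<forall>i\<in>I. \<forall>\<epsilon>>0. (\<lambda>j. dens_ratio {n. a i n < \<epsilon>} (Ns j)) \<longlonglongrightarrow> 1))"
proof
  assume "\<exists>A. upper_dens A = 1 \<and> (\<forall>i\<in>I. \<forall>\<epsilon>>0. finite (A - {n. a i n < \<epsilon>}))"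
  then obtain A Ns where "\<forall>i\<in>I. \<forall>\<epsilon>>0. finite (A - {n. a i n < \<epsilon>})"
    "strict_mono Ns" "(\<lambda>j. dens_ratio A (Ns j)) \<longlonglongrightarrow> 1"
    using upper_dens_eq_1_iff by blast
  then show "\<exists>Ns. strict_mono Ns \<and> (\<forall>i\<in>I. \<forall>\<epsilon>>0. (\<lambda>j. dens_ratio {n. a i n < \<epsilon>} (Ns j)) \<longlonglongrightarrow> 1)"
    using tendsto_dens_ratio_1_almost_subset[OF filterlim_subseq] by blast
next
  assume "\<exists>Ns. strict_mono Ns \<and> (\<forall>i\<in>I. \<forall>\<epsilon>>0. (\<lambda>j. dens_ratio {n. a i n < \<epsilon>} (Ns j)) \<longlonglongrightarrow> 1)"
  then obtain Ns where Ns: "strict_mono Ns"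
    "\<And>i \<epsilon>. i \<in> I \<Longrightarrow> \<epsilon> > 0 \<Longrightarrow> (\<lambda>j. dens_ratio {n. a i n < \<epsilon>} (Ns j)) \<longlonglongrightarrow> 1"
    by blast
  define S where "S = (\<lambda>(i, k). {n. a i n < ennreal (1 / real (Suc k))})"
  have "countable (I \<times> (UNIV :: nat set))"
    using assms by (intro countable_SIGMA) auto
  then obtain A where A: "upper_dens A = 1" "\<And>i k. i \<in> I \<Longrightarrow> finite (A - S (i, k))"
    using upper_dens_1_almost_subset_countable[OF _ Ns(1), of _ S] Ns(2) by (force simp: S_def)
  have "finite (A - {n. a i n < \<epsilon>})" if "i \<in> I" "\<epsilon> > 0" for i \<epsilon>
  proof -
    have "(\<lambda>k. ennreal (1 / real (Suc k))) \<longlonglongrightarrow> 0"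
      using tendsto_ennrealI[OF LIMSEQ_inverse_real_of_nat] by (simp add: inverse_eq_divide)
    then obtain k where "ennreal (1 / real (Suc k)) < \<epsilon>"
      using order_tendsto_iff \<open>\<epsilon> > 0\<close> eventually_happens'[OF trivial_limit_sequentially] by metis
    then have "A - {n. a i n < \<epsilon>} \<subseteq> A - S (i, k)"
      by (auto simp: S_def less_trans)
    then show ?thesis
      using A(2)[OF \<open>i \<in> I\<close>] by (rule finite_subset)
  qed
  with A(1) show "\<exists>A. upper_dens A = 1 \<and> (\<forall>i\<in>I. \<forall>\<epsilon>>0. finite (A - {n. a i n < \<epsilon>}))"
    by blast
qed

lemma eventually_dens_ratio_ge_iff_card:
  assumes "strict_mono Ns"
  shows "eventually (\<lambda>j. c \<le> dens_ratio A (Ns j)) sequentially \<longleftrightarrow>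
    (\<exists>j0. \<forall>j\<ge>j0. real (card {n \<in> {1..Ns j}. n \<in> A}) \<ge> real (Ns j) * c)"
proof -
  have "eventually (\<lambda>j. 1 \<le> Ns j) sequentially"
    using filterlim_subseq[OF assms] by (simp add: filterlim_at_top)
  then have "eventually (\<lambda>j. c \<le> dens_ratio A (Ns j) \<longleftrightarrow> real (Ns j) * c \<le> real (card {n \<in> {1..Ns j}. n \<in> A})) sequentially"
    by eventually_elim (simp add: dens_ratio_ge_iff Int_def conj_commute)
  then have "eventually (\<lambda>j. c \<le> dens_ratio A (Ns j)) sequentially \<longleftrightarrow>
      eventually (\<lambda>j. real (Ns j) * c \<le> real (card {n \<in> {1..Ns j}. n \<in> A})) sequentially"
    by (rule eventually_subst)
  then show ?thesis
    unfolding eventually_sequentially .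
qed

lemma tendsto_dens_ratio_sublevel_iff:
  fixes a :: "nat \<Rightarrow> ennreal"
  shows "(\<forall>\<epsilon>>0. (\<lambda>j. dens_ratio {n. a n < \<epsilon>} (Ns j)) \<longlonglongrightarrow> 1) \<longleftrightarrow>
    (\<forall>k::nat. k \<ge> 1 \<longrightarrow> eventually (\<lambda>j. 1 - 1 / real k \<le> dens_ratio {n. a n < ennreal (1 / real k)} (Ns j)) sequentially)"
proof (intro iffI allI impI)
  fix k :: nat assume "\<forall>\<epsilon>>0. (\<lambda>j. dens_ratio {n. a n < \<epsilon>} (Ns j)) \<longlonglongrightarrow> 1" and "k \<ge> 1"
  then have "(\<lambda>j. dens_ratio {n. a n < ennreal (1 / real k)} (Ns j)) \<longlonglongrightarrow> 1"
    by simp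
  moreover have "1 - 1 / real k < 1"
    using \<open>k \<ge> 1\<close> by simp
  ultimately have "eventually (\<lambda>j. 1 - 1 / real k < dens_ratio {n. a n < ennreal (1 / real k)} (Ns j)) sequentially"
    by (simp add: order_tendsto_iff)
  then show "eventually (\<lambda>j. 1 - 1 / real k \<le> dens_ratio {n. a n < ennreal (1 / real k)} (Ns j)) sequentially"
    by (rule eventually_mono) simp
next
  fix \<epsilon> :: ennreal
  assume H: "\<forall>k::nat. k \<ge> 1 \<longrightarrow> eventually (\<lambda>j. 1 - 1 / real k \<le> dens_ratio {n. a n < ennreal (1 / real k)} (Ns j)) sequentially"
    and "\<epsilon> > 0"
  show "(\<lambda>j. dens_ratio {n. a n < \<epsilon>} (Ns j)) \<longlonglongrightarrow> 1"
    unfolding order_tendsto_iff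
  proof (intro conjI allI impI)
    fix l :: real assume "l < 1"
    have "eventually (\<lambda>k. 1 \<le> k \<and> ennreal (1 / real k) < \<epsilon> \<and> 1 / real k < 1 - l) sequentially"
      using tendsto_ennrealI[OF lim_inverse_n'] lim_inverse_n' \<open>\<epsilon> > 0\<close> \<open>l < 1\<close>
      by (auto simp: order_tendsto_iff intro!: eventually_conj eventually_ge_at_top)
    then obtain k :: nat where k: "1 \<le> k" "ennreal (1 / real k) < \<epsilon>" "l < 1 - 1 / real k"
      using eventually_happens'[OF trivial_limit_sequentially] by force
    have "dens_ratio {n. a n < ennreal (1 / real k)} N \<le> dens_ratio {n. a n < \<epsilon>} N" for N
      using k(2) by (intro dens_ratio_mono) (auto intro: less_trans)
    moreover have "eventually (\<lambda>j. 1 - 1 / real k \<le> dens_ratio {n. a n < ennreal (1 / real k)} (Ns j)) sequentially"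
      using H k(1) by simp
    ultimately show "eventually (\<lambda>j. l < dens_ratio {n. a n < \<epsilon>} (Ns j)) sequentially"
      using k(3) by (elim eventually_mono) (meson less_le_trans order_trans)
  next
    fix u :: real assume "1 < u"
    then show "eventually (\<lambda>j. dens_ratio {n. a n < \<epsilon>} (Ns j) < u) sequentially"
      by (intro always_eventually allI le_less_trans[OF dens_ratio_le_1])
  qed
qed

lemma tendsto_dens_ratio_sublevel_iff_card:
  fixes a :: "nat \<Rightarrow> ennreal"
  assumes "strict_mono Ns"
  shows "(\<forall>\<epsilon>>0. (\<lambda>j. dens_ratio {n. a n < \<epsilon>} (Ns j)) \<longlonglongrightarrow> 1) \<longleftrightarrow>
    (\<forall>k::nat. k \<ge> 1 \<longrightarrow> (\<exists>j0. \<forall>j\<ge>j0.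
      real (card {n \<in> {1..Ns j}. a n < ennreal (1 / real k)}) \<ge> real (Ns j) * (1 - 1 / real k)))"
  by (simp add: tendsto_dens_ratio_sublevel_iff eventually_dens_ratio_ge_iff_card[OF assms])

theorem mainTheorem8:
  fixes M :: "'a measure" and \<phi> :: "'a \<Rightarrow> 'a"
    and I :: "'i set" and B :: "'i \<Rightarrow> 'a set"
  assumes phi_meas: "\<phi> \<in> measurable M M"
    and I_countable: "countable I"
    and B_sets: "\<And>i. i \<in> I \<Longrightarrow> B i \<in> sets M"
    and B_pos: "\<And>i. i \<in> I \<Longrightarrow> emeasure M (B i) > 0"
  shows "(\<exists>A :: nat set. upper_dens A = 1 \<and>
            (\<forall>i\<in>I. ((\<lambda>n. emeasure M ((\<phi> ^^ n) -` B i \<inter> space M)) \<longlongrightarrow> 0)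
                      (inf sequentially (principal A))))
       \<longleftrightarrow>
         (\<exists>Ms :: nat \<Rightarrow> nat. strict_mono Ms \<and>
            (\<forall>k::nat. k \<ge> 1 \<longrightarrow> (\<forall>i\<in>I. \<exists>n_ki::nat. \<forall>j\<ge>n_ki.
               real (card {n \<in> {1..Ms j}.
                        emeasure M ((\<phi> ^^ n) -` B i \<inter> space M) < ennreal (1 / real k)})
                 \<ge> real (Ms j) * (1 - 1 / real k))))"
proof -
  define a where "a i n = emeasure M ((\<phi> ^^ n) -` B i \<inter> space M)" for i n
  have "(\<exists>A. upper_dens A = 1 \<and> (\<forall>i\<in>I. (a i \<longlongrightarrow> 0) (inf sequentially (principal A)))) \<longleftrightarrow>
      (\<exists>A. upper_dens A = 1 \<and> (\<forall>i\<in>I. \<forall>\<epsilon>>0. finite (A - {n. a i n < \<epsilon>})))"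
    by (simp add: tendsto_0_inf_principal_iff_finite_sublevel)
  also have "\<dots> \<longleftrightarrow> (\<exists>Ms. strict_mono Ms \<and> (\<forall>i\<in>I. \<forall>\<epsilon>>0. (\<lambda>j. dens_ratio {n. a i n < \<epsilon>} (Ms j)) \<longlonglongrightarrow> 1))"
    using I_countable by (rule ex_upper_dens_1_finite_sublevel_iff)
  also have "\<dots> \<longleftrightarrow> (\<exists>Ms :: nat \<Rightarrow> nat. strict_mono Ms \<and> (\<forall>i\<in>I. \<forall>k::nat. k \<ge> 1 \<longrightarrow> (\<exists>j0. \<forall>j\<ge>j0.
      real (card {n \<in> {1..Ms j}. a i n < ennreal (1 / real k)}) \<ge> real (Ms j) * (1 - 1 / real k))))"
    using tendsto_dens_ratio_sublevel_iff_card by blast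
  finally show ?thesis
    unfolding a_def by blast
qed

end
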